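(* Let $n$ be a natural number and let $P\subseteq S_n$ be a subset of the symmetric group with $|P|=6$ such that for all $I,J\subseteq[n]$ the set $\{\pi\in P\mid \pi(I)=J\}$ has cardinality $0$ or at least $2$, and has cardinality $0$ or exactly $2$ if $|I|=|J|=1$. Then $n=3$ and $P=S_3$. *)

theory Defs
  imports "HOL-Combinatorics.Permutations"
begin

end

theory Submission
  imports Defs
begin

(* Fix \<pi> \<in> P. Each point k has a unique partner \<tau> \<in> P - {\<pi>} with \<tau> k = \<pi> k, so distinct
   elements of P - {\<pi>} agree with \<pi> on disjoint sets of points. If \<tau> is the partner at k and
   \<tau> c \<noteq> \<pi> c, the hypothesis for the pair {k, c} yields \<sigma> \<in> P with \<sigma> k = \<pi> c; as only three
   values occur at position k, \<tau> and \<pi> disagree in at most two points. With four or more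
   points, let \<tau> be the partner at some i and \<tau>' the partner at a point where \<tau> disagrees
   with \<pi>. Counting forces \<tau>' to agree with \<pi> exactly where \<tau> does not; but \<tau>' i \<noteq> \<pi> i is
   a value at position i, hence equals \<pi> c = \<tau>' c for such a c, contradicting injectivity.
   So n \<le> 3, and 6 = |P| \<le> n! forces n = 3 and P = S_3. *)

lemma card_eq_mult_card_image:
  assumes "finite A" and "\<And>x. x \<in> A \<Longrightarrow> card {y\<in>A. f y = f x} = m"
  shows "card A = m * card (f ` A)"
proof -
  have "card A = (\<Sum>v\<in>f ` A. card {y\<in>A. f y = v})"
    using sum.image_gen[OF assms(1), of "\<lambda>_. 1 :: nat" f] by simp
  also have "\<dots> = (\<Sum>v\<in>f ` A. m)"
    by (rule sum.cong) (auto simp: assms(2))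
  finally show ?thesis by simp
qed

lemma ex_other_if_two_le_card:
  assumes "finite A" and "2 \<le> card A" and "x \<in> A"
  shows "\<exists>y\<in>A. y \<noteq> x"
  using assms card_le_Suc0_iff_eq[OF assms(1)] by (metis not_less_eq_eq numeral_2_eq_2)

locale twofold_perm_set =
  fixes S :: "'a set" and P :: "('a \<Rightarrow> 'a) set"
  assumes finite_S: "finite S"
    and card_P: "card P = 6"
    and permutes_S: "\<pi> \<in> P \<Longrightarrow> \<pi> permutes S"
    and card_point_fibre: "k \<in> S \<Longrightarrow> \<pi> \<in> P \<Longrightarrow> card {\<sigma>\<in>P. \<sigma> k = \<pi> k} = 2"
    and pair_fibre_not_singleton:
      "a \<in> S \<Longrightarrow> b \<in> S \<Longrightarrow> \<pi> \<in> P \<Longrightarrow> \<exists>\<sigma>\<in>P. \<sigma> \<noteq> \<pi> \<and> \<sigma> ` {a, b} = \<pi> ` {a, b}"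
begin

lemma finite_P: "finite P"
  using card_P by (metis card.infinite zero_neq_numeral)

lemma inj_P: "\<pi> \<in> P \<Longrightarrow> inj \<pi>"
  using permutes_inj permutes_S by blast

lemma card_image_eval: "k \<in> S \<Longrightarrow> card ((\<lambda>\<sigma>. \<sigma> k) ` P) = 3"
  using card_eq_mult_card_image[OF finite_P, of "\<lambda>\<sigma>. \<sigma> k" 2] card_point_fibre card_P by auto

lemma ex_partner:
  assumes "k \<in> S" and "\<pi> \<in> P"
  obtains \<tau> where "\<tau> \<in> P" and "\<tau> \<noteq> \<pi>" and "\<tau> k = \<pi> k"
  using ex_other_if_two_le_card[of "{\<sigma>\<in>P. \<sigma> k = \<pi> k}" \<pi>] card_point_fibre[OF assms] finite_P
    assms(2) that
  by auto

lemma point_fibre_eq: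
  assumes "\<pi> \<in> P" and "\<tau> \<in> P" and "\<tau> \<noteq> \<pi>" and "k \<in> S" and "\<tau> k = \<pi> k"
  shows "{\<sigma>\<in>P. \<sigma> k = \<pi> k} = {\<pi>, \<tau>}"
proof (rule sym, rule card_subset_eq)
  show "{\<pi>, \<tau>} \<subseteq> {\<sigma>\<in>P. \<sigma> k = \<pi> k}" using assms by auto
  show "card {\<pi>, \<tau>} = card {\<sigma>\<in>P. \<sigma> k = \<pi> k}" using assms card_point_fibre by auto
qed (use finite_P in simp)

lemma disagreement_image_subset:
  assumes "\<pi> \<in> P" and "\<tau> \<in> P" and "\<tau> \<noteq> \<pi>" and "k \<in> S" and "\<tau> k = \<pi> k"
  shows "\<pi> ` {c\<in>S. \<tau> c \<noteq> \<pi> c} \<subseteq> (\<lambda>\<sigma>. \<sigma> k) ` P - {\<pi> k}"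
proof (rule image_subsetI)
  fix c assume "c \<in> {c\<in>S. \<tau> c \<noteq> \<pi> c}"
  then have "c \<in> S" and disagree: "\<tau> c \<noteq> \<pi> c" by simp_all
  then have "c \<noteq> k" using assms(5) by auto
  then have "\<pi> c \<noteq> \<pi> k" using inj_P[OF assms(1)] by (auto dest: injD)
  obtain \<sigma> where "\<sigma> \<in> P" "\<sigma> \<noteq> \<pi>" and swap: "\<sigma> ` {k, c} = \<pi> ` {k, c}"
    using pair_fibre_not_singleton[OF assms(4) \<open>c \<in> S\<close> assms(1)] by blast
  have "\<sigma> k \<noteq> \<pi> k"
  proof
    assume "\<sigma> k = \<pi> k"
    then have "\<sigma> = \<tau>" using point_fibre_eq[OF assms] \<open>\<sigma> \<in> P\<close> \<open>\<sigma> \<noteq> \<pi>\<close> by blast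
    moreover have "\<sigma> c \<noteq> \<sigma> k" using \<open>c \<noteq> k\<close> inj_P[OF \<open>\<sigma> \<in> P\<close>] by (auto dest: injD)
    ultimately show False using swap disagree assms(5) by auto
  qed
  then have "\<pi> c = \<sigma> k" using swap by auto
  then show "\<pi> c \<in> (\<lambda>\<sigma>. \<sigma> k) ` P - {\<pi> k}"
    using \<open>\<sigma> \<in> P\<close> \<open>\<pi> c \<noteq> \<pi> k\<close> by auto
qed

lemma card_disagreement_le_2:
  assumes "\<pi> \<in> P" and "\<tau> \<in> P" and "\<tau> \<noteq> \<pi>" and "k \<in> S" and "\<tau> k = \<pi> k"
  shows "card {c\<in>S. \<tau> c \<noteq> \<pi> c} \<le> 2"
proof -
  have "card {c\<in>S. \<tau> c \<noteq> \<pi> c} = card (\<pi> ` {c\<in>S. \<tau> c \<noteq> \<pi> c})"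
    using inj_P[OF assms(1)] by (simp add: card_image inj_on_subset)
  also have "\<dots> \<le> card ((\<lambda>\<sigma>. \<sigma> k) ` P - {\<pi> k})"
    using disagreement_image_subset[OF assms] finite_P by (simp add: card_mono)
  also have "\<dots> = 2"
    using card_image_eval[OF assms(4)] assms(1) by (simp add: card_Diff_singleton)
  finally show ?thesis .
qed

lemma agreement_set_ne_disagreement_set:
  assumes "\<pi> \<in> P" and "\<tau> \<in> P" and "\<tau> \<noteq> \<pi>" and "i \<in> S" and "\<tau> i = \<pi> i"
    and "\<tau>' \<in> P" and card_D: "card {c\<in>S. \<tau> c \<noteq> \<pi> c} = 2"
  shows "{c\<in>S. \<tau>' c = \<pi> c} \<noteq> {c\<in>S. \<tau> c \<noteq> \<pi> c}"
proof
  define D where "D = {c\<in>S. \<tau> c \<noteq> \<pi> c}"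
  assume "{c\<in>S. \<tau>' c = \<pi> c} = {c\<in>S. \<tau> c \<noteq> \<pi> c}"
  then have agree_D: "c \<in> D \<longleftrightarrow> c \<in> S \<and> \<tau>' c = \<pi> c" for c
    unfolding D_def by blast
  have "\<pi> ` D = (\<lambda>\<sigma>. \<sigma> i) ` P - {\<pi> i}"
  proof (rule card_subset_eq)
    show "\<pi> ` D \<subseteq> (\<lambda>\<sigma>. \<sigma> i) ` P - {\<pi> i}"
      unfolding D_def by (rule disagreement_image_subset[OF assms(1-5)])
    show "card (\<pi> ` D) = card ((\<lambda>\<sigma>. \<sigma> i) ` P - {\<pi> i})"
      using inj_P[OF assms(1)] card_D card_image_eval[OF assms(4)] assms(1)
      by (simp add: D_def card_image inj_on_subset card_Diff_singleton)
  qed (use finite_P in simp)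
  moreover have "i \<notin> D" using assms(5) by (simp add: D_def)
  then have "\<tau>' i \<noteq> \<pi> i" using agree_D assms(4) by blast
  ultimately have "\<tau>' i \<in> \<pi> ` D" using assms(6) by blast
  then obtain c where "c \<in> D" and "\<tau>' i = \<pi> c" by blast
  then have "\<tau>' i = \<tau>' c" using agree_D by simp
  then have "c = i" using inj_P[OF assms(6)] by (auto dest: injD)
  with \<open>c \<in> D\<close> \<open>i \<notin> D\<close> show False by simp
qed

lemma card_S_le_3: "card S \<le> 3"
proof (rule ccontr)
  assume "\<not> card S \<le> 3"
  then obtain i where "i \<in> S" by fastforce
  obtain \<pi> where "\<pi> \<in> P" using card_P by fastforce
  obtain \<tau> where \<tau>: "\<tau> \<in> P" "\<tau> \<noteq> \<pi>" "\<tau> i = \<pi> i" using ex_partner[OF \<open>i \<in> S\<close> \<open>\<pi> \<in> P\<close>] .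
  define C where "C = {c\<in>S. \<tau> c \<noteq> \<pi> c}"
  have "C \<noteq> {}"
  proof
    assume "C = {}"
    then have "\<tau> x = \<pi> x" for x
      using permutes_not_in[OF permutes_S[OF \<tau>(1)]] permutes_not_in[OF permutes_S[OF \<open>\<pi> \<in> P\<close>]]
      by (cases "x \<in> S") (auto simp: C_def)
    then show False using \<tau>(2) by auto
  qed
  then obtain j where "j \<in> C" by blast
  then have "j \<in> S" by (simp add: C_def)
  obtain \<tau>' where \<tau>': "\<tau>' \<in> P" "\<tau>' \<noteq> \<pi>" "\<tau>' j = \<pi> j" using ex_partner[OF \<open>j \<in> S\<close> \<open>\<pi> \<in> P\<close>] .
  define A' C' where "A' = {c\<in>S. \<tau>' c = \<pi> c}" and "C' = {c\<in>S. \<tau>' c \<noteq> \<pi> c}"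
  have "A' \<subseteq> C"
  proof
    fix x assume "x \<in> A'"
    then have "x \<in> S" and "\<tau>' x = \<pi> x" by (simp_all add: A'_def)
    have "\<tau> x \<noteq> \<pi> x"
    proof
      assume "\<tau> x = \<pi> x"
      then have "\<tau>' \<in> {\<pi>, \<tau>}"
        using point_fibre_eq[OF \<open>\<pi> \<in> P\<close> \<tau>(1,2) \<open>x \<in> S\<close>] \<tau>'(1) \<open>\<tau>' x = \<pi> x\<close> by blast
      then show False using \<tau>'(2,3) \<open>j \<in> C\<close> by (auto simp: C_def)
    qed
    then show "x \<in> C" using \<open>x \<in> S\<close> by (simp add: C_def)
  qed
  have "card C \<le> 2" and "card C' \<le> 2"
    using card_disagreement_le_2 \<tau> \<tau>' \<open>i \<in> S\<close> \<open>j \<in> S\<close> \<open>\<pi> \<in> P\<close> by (auto simp: C_def C'_def)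
  moreover have "S = A' \<union> C'" by (auto simp: A'_def C'_def)
  then have "card S \<le> card A' + card C'" by (metis card_Un_le)
  moreover have finite_C: "finite C" using finite_S by (simp add: C_def)
  then have "card A' \<le> card C" using \<open>A' \<subseteq> C\<close> by (rule card_mono)
  ultimately have "card C = 2" and "card A' = card C" using \<open>\<not> card S \<le> 3\<close> by linarith+
  then have "A' = C" using card_subset_eq[OF finite_C \<open>A' \<subseteq> C\<close>] by simp
  with \<open>card C = 2\<close> show False
    using agreement_set_ne_disagreement_set[OF \<open>\<pi> \<in> P\<close> \<tau>(1,2) \<open>i \<in> S\<close> \<tau>(3) \<tau>'(1)]
    by (simp add: A'_def C_def)
qed

lemma card_S_eq_3: "card S = 3"
proof -
  have "card P \<le> card {\<pi>. \<pi> permutes S}"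
    using permutes_S by (intro card_mono finite_permutations finite_S) blast
  then have "6 \<le> (fact (card S) :: nat)"
    using card_P card_permutations[OF refl finite_S] by simp
  moreover have "fact (card S) \<le> (2 :: nat)" if "card S \<le> 2"
    using fact_mono[OF that] by simp
  ultimately show ?thesis
    using card_S_le_3 by (cases "card S \<le> 2") auto
qed

lemma P_eq_permutations: "P = {\<pi>. \<pi> permutes S}"
proof (rule card_subset_eq)
  show "finite {\<pi>. \<pi> permutes S}" using finite_permutations[OF finite_S] .
  show "P \<subseteq> {\<pi>. \<pi> permutes S}" using permutes_S by blast
  show "card P = card {\<pi>. \<pi> permutes S}"
    using card_P card_permutations[OF refl finite_S] card_S_eq_3 by (simp add: fact_numeral)
qed

end

lemma twofold_perm_setI:
  assumes "finite S" and "\<forall>\<pi>\<in>P. \<pi> permutes S" and "card P = 6"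
    and pairs: "\<forall>I J. I \<subseteq> S \<and> J \<subseteq> S \<longrightarrow>
           card {\<pi>\<in>P. \<pi> ` I = J} = 0 \<or> card {\<pi>\<in>P. \<pi> ` I = J} \<ge> 2"
    and points: "\<forall>I J. I \<subseteq> S \<and> J \<subseteq> S \<and> card I = 1 \<and> card J = 1 \<longrightarrow>
           card {\<pi>\<in>P. \<pi> ` I = J} = 0 \<or> card {\<pi>\<in>P. \<pi> ` I = J} = 2"
  shows "twofold_perm_set S P"
proof -
  have finite_P: "finite P" using assms(3) by (metis card.infinite zero_neq_numeral)
  have perm: "\<pi> permutes S" if "\<pi> \<in> P" for \<pi> using assms(2) that by blast
  show ?thesis
  proof
    show "finite S" and "card P = 6" by (fact assms(1,3))+
    show "\<pi> permutes S" if "\<pi> \<in> P" for \<pi> using that by (rule perm)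
  next
    fix k \<pi> assume "k \<in> S" and "\<pi> \<in> P"
    then have "\<pi> k \<in> S" using permutes_in_image[OF perm] by simp
    then have "card {\<sigma>\<in>P. \<sigma> ` {k} = {\<pi> k}} \<in> {0, 2}"
      using points[rule_format, of "{k}" "{\<pi> k}"] \<open>k \<in> S\<close> by simp
    moreover have "{\<sigma>\<in>P. \<sigma> ` {k} = {\<pi> k}} = {\<sigma>\<in>P. \<sigma> k = \<pi> k}" by auto
    moreover have "card {\<sigma>\<in>P. \<sigma> k = \<pi> k} \<noteq> 0" using \<open>\<pi> \<in> P\<close> finite_P by auto
    ultimately show "card {\<sigma>\<in>P. \<sigma> k = \<pi> k} = 2" by simp
  next
    fix a b \<pi> assume "a \<in> S" and "b \<in> S" and "\<pi> \<in> P"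
    then have "\<pi> ` {a, b} \<subseteq> S" using permutes_in_image[OF perm] by simp
    then have "card {\<sigma>\<in>P. \<sigma> ` {a, b} = \<pi> ` {a, b}} \<noteq> 1"
      using pairs[rule_format, of "{a, b}" "\<pi> ` {a, b}"] \<open>a \<in> S\<close> \<open>b \<in> S\<close> by auto
    moreover have "card {\<sigma>\<in>P. \<sigma> ` {a, b} = \<pi> ` {a, b}} \<noteq> 0" using \<open>\<pi> \<in> P\<close> finite_P by auto
    ultimately show "\<exists>\<sigma>\<in>P. \<sigma> \<noteq> \<pi> \<and> \<sigma> ` {a, b} = \<pi> ` {a, b}"
      using ex_other_if_two_le_card[of "{\<sigma>\<in>P. \<sigma> ` {a, b} = \<pi> ` {a, b}}" \<pi>] finite_P \<open>\<pi> \<in> P\<close>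
      by fastforce
  qed
qed

theorem lemma3p4:
  fixes n :: nat and P :: "(nat \<Rightarrow> nat) set"
  assumes "\<forall>\<pi>\<in>P. \<pi> permutes {1..n}"
    and "card P = 6"
    and "\<forall>I J. I \<subseteq> {1..n} \<and> J \<subseteq> {1..n} \<longrightarrow>
           card {\<pi>\<in>P. \<pi> ` I = J} = 0 \<or> card {\<pi>\<in>P. \<pi> ` I = J} \<ge> 2"
    and "\<forall>I J. I \<subseteq> {1..n} \<and> J \<subseteq> {1..n} \<and> card I = 1 \<and> card J = 1 \<longrightarrow>
           card {\<pi>\<in>P. \<pi> ` I = J} = 0 \<or> card {\<pi>\<in>P. \<pi> ` I = J} = 2"
  shows "n = 3 \<and> P = {\<pi>. \<pi> permutes {1..n}}"
proof -
  interpret twofold_perm_set "{1..n}" P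
    using twofold_perm_setI[OF finite_atLeastAtMost assms] .
  show ?thesis using card_S_eq_3 P_eq_permutations by simp
qed

end
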